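(* Consider a zero-one knapsack instance with $n$ items, integer capacity $W>0$, positive integer weights $w_i$ and integer profits $v_i$, and let $\mathcal{S}^*$ be its set of optimal solutions. Let $V(i,w)$, $C(i,w)$ be the tables defined by: $V(0,w)=0$, $C(0,w)=1$ for $0\le w\le W$; $V(i,w)=-\infty$, $C(i,w)=0$ for $w<0$; and for $1\le i\le n$, $0\le w\le W$, $V(i,w)=\max\{V(i-1,w),V(i-1,w-w_i)+v_i\}$ and $C(i,w)=C(i-1,w)+C(i-1,w-w_i)$ if $V(i-1,w)=V(i-1,w-w_i)+v_i$, $C(i,w)=C(i-1,w)$ if $V(i-1,w)>V(i-1,w-w_i)+v_i$, and $C(i,w)=C(i-1,w-w_i)$ otherwise. Consider the following randomized sampling procedure: start with $L=\emptyset$, $i=n$, $w=W$; while $i>0$ and $w>0$: if $w_i\le w$ and $V(i,w)=V(i-1,w)=V(i-1,w-w_i)+v_i$, then with probability $q=C(i-1,w-w_i)/C(i,w)$ (using a fresh uniform random number $r\in[0,1]$ and testing $r<q$) add $i$ to $L$ and set $w\leftarrow w-w_i$; else if $V(i,w)>V(i-1,w)$, add $i$ to $L$ and set $w\leftarrow w-w_i$; in all cases then set $i\leftarrow i-1$. Output $L$. Then for every $s\in\mathcal{S}^*$, the probability that the procedure outputs $s$ is $1/|\mathcal{S}^*|$.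
   Context: For $s\subseteq[n]=\{1,\dots,n\}$ let $w(s)=\sum_{i\in s}w_i$ and $v(s)=\sum_{i\in s}v_i$. The set of feasible solutions is $\mathcal{S}=\{s\subseteq[n]: w(s)\le W\}$, $v_{\max}=\max_{s\in\mathcal{S}}v(s)$, and $\mathcal{S}^*=\{s\in\mathcal{S}: v(s)=v_{\max}\}$. *)

theory Defs
  imports "HOL-Probability.Probability_Mass_Function" "HOL-Library.Extended_Real"
begin

definition feasible :: "nat \<Rightarrow> (nat \<Rightarrow> int) \<Rightarrow> int \<Rightarrow> nat set set" where
  "feasible n wt W = {s. s \<subseteq> {1..n} \<and> (\<Sum>i\<in>s. wt i) \<le> W}"

definition vmax :: "nat \<Rightarrow> (nat \<Rightarrow> int) \<Rightarrow> (nat \<Rightarrow> int) \<Rightarrow> int \<Rightarrow> int" where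
  "vmax n wt val W = Max ((\<lambda>s. \<Sum>i\<in>s. val i) ` feasible n wt W)"

definition opt_sols :: "nat \<Rightarrow> (nat \<Rightarrow> int) \<Rightarrow> (nat \<Rightarrow> int) \<Rightarrow> int \<Rightarrow> nat set set" where
  "opt_sols n wt val W = {s \<in> feasible n wt W. (\<Sum>i\<in>s. val i) = vmax n wt val W}"

primrec Vtab :: "(nat \<Rightarrow> int) \<Rightarrow> (nat \<Rightarrow> int) \<Rightarrow> nat \<Rightarrow> int \<Rightarrow> ereal" where
  "Vtab wt val 0 w = (if w < 0 then -\<infinity> else 0)"
| "Vtab wt val (Suc i) w = (if w < 0 then -\<infinity> else
     max (Vtab wt val i w) (Vtab wt val i (w - wt (Suc i)) + ereal (real_of_int (val (Suc i)))))"

primrec Ctab :: "(nat \<Rightarrow> int) \<Rightarrow> (nat \<Rightarrow> int) \<Rightarrow> nat \<Rightarrow> int \<Rightarrow> nat" where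
  "Ctab wt val 0 w = (if w < 0 then 0 else 1)"
| "Ctab wt val (Suc i) w = (if w < 0 then 0 else
     (let a = Vtab wt val i w;
          b = Vtab wt val i (w - wt (Suc i)) + ereal (real_of_int (val (Suc i)))
      in if a = b then Ctab wt val i w + Ctab wt val i (w - wt (Suc i))
         else if a > b then Ctab wt val i w
         else Ctab wt val i (w - wt (Suc i))))"

text \<open>The test "r < q" with r uniform
  on [0,1] is modelled by a Bernoulli(q) coin.\<close>
primrec sampler :: "(nat \<Rightarrow> int) \<Rightarrow> (nat \<Rightarrow> int) \<Rightarrow> nat \<Rightarrow> int \<Rightarrow> nat set pmf" where
  "sampler wt val 0 w = return_pmf {}"
| "sampler wt val (Suc i) w =
     (if w \<le> 0 then return_pmf {}
      else if wt (Suc i) \<le> w \<and> Vtab wt val (Suc i) w = Vtab wt val i w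
              \<and> Vtab wt val i w = Vtab wt val i (w - wt (Suc i)) + ereal (real_of_int (val (Suc i)))
      then bind_pmf (bernoulli_pmf (real (Ctab wt val i (w - wt (Suc i))) / real (Ctab wt val (Suc i) w)))
             (\<lambda>b. if b then map_pmf (insert (Suc i)) (sampler wt val i (w - wt (Suc i)))
                  else sampler wt val i w)
      else if Vtab wt val (Suc i) w > Vtab wt val i w
      then map_pmf (insert (Suc i)) (sampler wt val i (w - wt (Suc i)))
      else sampler wt val i w)"

end

theory Submission
  imports Defs
begin

(* Let opt_set i w be the set of optimal solutions of the subinstance with items 1..i and
   capacity w.  Whether or not it contains item i, an optimal solution restricts to an optimal
   solution of a subinstance on items 1..i-1, so opt_set i w is the disjoint union of
   opt_set (i-1) w, if skipping item i is optimal, and of {i} + opt_set (i-1) (w - w_i), if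
   taking it is optimal.  Hence C(i,w) = |opt_set i w|, and by induction on i the sampler
   started at (i,w) is uniform on opt_set i w: on a tie it takes item i with probability
   C(i-1, w-w_i)/C(i,w), the share of the second part, and mixing the uniform distributions
   on two disjoint sets with weights proportional to their sizes gives the uniform
   distribution on their union.  Positive weights make opt_set i 0 = {{}}, matching the
   sampler stopping at capacity 0. *)

lemma ereal_sum_insert:
  "finite t \<Longrightarrow> k \<notin> t \<Longrightarrow> ereal (real_of_int (\<Sum>j\<in>insert k t. f j))
     = ereal (real_of_int (\<Sum>j\<in>t. f j)) + ereal (real_of_int (f k))"
  by (simp add: add.commute)

lemma bind_bernoulli_pmf_of_set_Un:
  assumes "finite A" "finite B" "A \<noteq> {}" "B \<noteq> {}" "A \<inter> B = {}"
  shows "bind_pmf (bernoulli_pmf (real (card B) / real (card (A \<union> B))))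
      (\<lambda>c. if c then pmf_of_set B else pmf_of_set A) = pmf_of_set (A \<union> B)"
proof (rule pmf_eqI)
  fix x
  let ?p = "real (card B) / real (card (A \<union> B))"
  let ?M = "bind_pmf (bernoulli_pmf ?p) (\<lambda>c. if c then pmf_of_set B else pmf_of_set A)"
  have card_Un: "card (A \<union> B) = card A + card B"
    using assms by (simp add: card_Un_disjoint)
  moreover have "card A > 0" "card B > 0"
    using assms by auto
  ultimately have "0 \<le> ?p" "?p \<le> 1"
    by auto
  then have "pmf ?M x = pmf (pmf_of_set B) x * ?p + pmf (pmf_of_set A) x * (1 - ?p)"
    by (simp add: pmf_bind)
  also have "1 - ?p = real (card A) / real (card (A \<union> B))"
    using card_Un \<open>card A > 0\<close> by (simp add: field_simps)
  also have "pmf (pmf_of_set B) x * ?p + pmf (pmf_of_set A) x * \<dots> = pmf (pmf_of_set (A \<union> B)) x"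
    using assms \<open>card A > 0\<close> \<open>card B > 0\<close> by (auto simp: indicator_def)
  finally show "pmf ?M x = pmf (pmf_of_set (A \<union> B)) x" .
qed

definition opt_set :: "(nat \<Rightarrow> int) \<Rightarrow> (nat \<Rightarrow> int) \<Rightarrow> nat \<Rightarrow> int \<Rightarrow> nat set set" where
  "opt_set wt val i w = {s. s \<subseteq> {1..i} \<and> (\<Sum>j\<in>s. wt j) \<le> w
     \<and> ereal (real_of_int (\<Sum>j\<in>s. val j)) = Vtab wt val i w}"

abbreviation Vtab_take :: "(nat \<Rightarrow> int) \<Rightarrow> (nat \<Rightarrow> int) \<Rightarrow> nat \<Rightarrow> int \<Rightarrow> ereal" where
  "Vtab_take wt val i w \<equiv> Vtab wt val i (w - wt (Suc i)) + ereal (real_of_int (val (Suc i)))"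

lemma Vtab_negative: "w < 0 \<Longrightarrow> Vtab wt val i w = -\<infinity>"
  by (cases i) auto

lemma Vtab_nonneg: "0 \<le> w \<Longrightarrow> 0 \<le> Vtab wt val i w"
  by (induction i) (auto simp: le_max_iff_disj)

lemma item_fits_if_Vtab_le_Vtab_take:
  assumes "0 \<le> w" "Vtab wt val i w \<le> Vtab_take wt val i w"
  shows "wt (Suc i) \<le> w"
proof (rule ccontr)
  assume "\<not> wt (Suc i) \<le> w"
  then have "Vtab_take wt val i w = -\<infinity>"
    by (simp add: Vtab_negative)
  with assms Vtab_nonneg[of w wt val i] show False
    by simp
qed

lemma sum_val_le_Vtab:
  assumes "\<forall>j\<in>{1..i}. 0 \<le> wt j" "s \<subseteq> {1..i}" "(\<Sum>j\<in>s. wt j) \<le> w"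
  shows "ereal (real_of_int (\<Sum>j\<in>s. val j)) \<le> Vtab wt val i w"
  using assms
proof (induction i arbitrary: s w)
  case 0
  then show ?case by auto
next
  case (Suc i)
  have nonneg: "\<forall>j\<in>{1..i}. 0 \<le> wt j"
    using Suc.prems(1) by auto
  have "0 \<le> w"
    using Suc.prems sum_nonneg[of s wt] by fastforce
  then have V: "Vtab wt val (Suc i) w = max (Vtab wt val i w) (Vtab_take wt val i w)"
    by simp
  show ?case
  proof (cases "Suc i \<in> s")
    case False
    then have "s \<subseteq> {1..i}"
      using Suc.prems(2) by (auto simp: le_Suc_eq)
    then show ?thesis
      unfolding V using Suc.IH[OF nonneg _ Suc.prems(3)] by (simp add: le_max_iff_disj)
  next
    case True
    define t where "t = s - {Suc i}"
    have s: "s = insert (Suc i) t" "Suc i \<notin> t" "finite t"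
      using True Suc.prems(2) finite_subset by (auto simp: t_def)
    have "t \<subseteq> {1..i}"
      using Suc.prems(2) by (auto simp: t_def le_Suc_eq)
    moreover have "(\<Sum>j\<in>t. wt j) \<le> w - wt (Suc i)"
      using Suc.prems(3) s by simp
    ultimately have "ereal (real_of_int (\<Sum>j\<in>t. val j)) \<le> Vtab wt val i (w - wt (Suc i))"
      by (rule Suc.IH[OF nonneg])
    then have "ereal (real_of_int (\<Sum>j\<in>s. val j)) \<le> Vtab_take wt val i w"
      unfolding s(1) ereal_sum_insert[OF s(3,2)] by (rule add_right_mono)
    then show ?thesis
      unfolding V by (simp add: le_max_iff_disj)
  qed
qed

lemma opt_set_negative: "w < 0 \<Longrightarrow> opt_set wt val i w = {}"
  by (simp add: opt_set_def Vtab_negative)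

lemma opt_set_0: "0 \<le> w \<Longrightarrow> opt_set wt val 0 w = {{}}"
  by (auto simp: opt_set_def)

lemma opt_set_Suc_skipD:
  assumes "\<forall>j\<in>{1..i}. 0 \<le> wt j" "0 \<le> w"
    and s: "s \<in> opt_set wt val (Suc i) w" "Suc i \<notin> s"
  shows "s \<in> opt_set wt val i w" "Vtab wt val i w = Vtab wt val (Suc i) w"
proof -
  from s have "s \<subseteq> {1..i}" "(\<Sum>j\<in>s. wt j) \<le> w"
    and val_s: "ereal (real_of_int (\<Sum>j\<in>s. val j)) = Vtab wt val (Suc i) w"
    by (auto simp: opt_set_def le_Suc_eq)
  moreover from this have "ereal (real_of_int (\<Sum>j\<in>s. val j)) \<le> Vtab wt val i w"
    using sum_val_le_Vtab[OF assms(1)] by blast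
  ultimately show "Vtab wt val i w = Vtab wt val (Suc i) w"
    using \<open>0 \<le> w\<close> by (auto intro: antisym)
  with \<open>s \<subseteq> {1..i}\<close> \<open>(\<Sum>j\<in>s. wt j) \<le> w\<close> val_s show "s \<in> opt_set wt val i w"
    by (simp add: opt_set_def)
qed

lemma opt_set_Suc_takeD:
  assumes "\<forall>j\<in>{1..i}. 0 \<le> wt j" "0 \<le> w"
    and s: "s \<in> opt_set wt val (Suc i) w" "Suc i \<in> s"
  shows "s - {Suc i} \<in> opt_set wt val i (w - wt (Suc i))"
    "Vtab_take wt val i w = Vtab wt val (Suc i) w"
proof -
  define t where "t = s - {Suc i}"
  from s have "s \<subseteq> {1..Suc i}" "(\<Sum>j\<in>s. wt j) \<le> w"
    and val_s: "ereal (real_of_int (\<Sum>j\<in>s. val j)) = Vtab wt val (Suc i) w"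
    by (auto simp: opt_set_def)
  then have st: "s = insert (Suc i) t" "Suc i \<notin> t" "finite t"
    using s(2) finite_subset by (auto simp: t_def)
  have "t \<subseteq> {1..i}"
    using \<open>s \<subseteq> {1..Suc i}\<close> by (auto simp: t_def le_Suc_eq)
  moreover have "(\<Sum>j\<in>t. wt j) \<le> w - wt (Suc i)"
    using \<open>(\<Sum>j\<in>s. wt j) \<le> w\<close> st by simp
  ultimately have t: "t \<subseteq> {1..i}" "(\<Sum>j\<in>t. wt j) \<le> w - wt (Suc i)" .
  have val_st: "ereal (real_of_int (\<Sum>j\<in>s. val j))
      = ereal (real_of_int (\<Sum>j\<in>t. val j)) + ereal (real_of_int (val (Suc i)))"
    unfolding st(1) by (rule ereal_sum_insert[OF st(3,2)])
  have "ereal (real_of_int (\<Sum>j\<in>t. val j)) \<le> Vtab wt val i (w - wt (Suc i))"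
    by (rule sum_val_le_Vtab[OF assms(1) t])
  then have "ereal (real_of_int (\<Sum>j\<in>s. val j)) \<le> Vtab_take wt val i w"
    unfolding val_st by (rule add_right_mono)
  then show take: "Vtab_take wt val i w = Vtab wt val (Suc i) w"
    using val_s \<open>0 \<le> w\<close> by (auto intro: antisym)
  then have "ereal (real_of_int (\<Sum>j\<in>t. val j)) = Vtab wt val i (w - wt (Suc i))"
    using val_s unfolding val_st take[symmetric]
    by (cases "Vtab wt val i (w - wt (Suc i))") auto
  with t show "s - {Suc i} \<in> opt_set wt val i (w - wt (Suc i))"
    by (simp add: opt_set_def t_def)
qed

lemma opt_set_Suc_eq_Un:
  assumes nonneg: "\<forall>j\<in>{1..i}. 0 \<le> wt j" and "0 \<le> w"
  shows "opt_set wt val (Suc i) w =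
    (if Vtab wt val i w = Vtab wt val (Suc i) w then opt_set wt val i w else {}) \<union>
    (if Vtab_take wt val i w = Vtab wt val (Suc i) w
     then insert (Suc i) ` opt_set wt val i (w - wt (Suc i)) else {})"
  (is "?L = ?R")
proof (intro set_eqI iffI)
  fix s
  assume "s \<in> ?L"
  show "s \<in> ?R"
  proof (cases "Suc i \<in> s")
    case False
    then show ?thesis
      using opt_set_Suc_skipD[OF nonneg \<open>0 \<le> w\<close> \<open>s \<in> ?L\<close>] by simp
  next
    case True
    note take = opt_set_Suc_takeD[OF nonneg \<open>0 \<le> w\<close> \<open>s \<in> ?L\<close> True]
    have "s \<in> insert (Suc i) ` opt_set wt val i (w - wt (Suc i))"
      using True by (intro image_eqI[OF _ take(1)]) blast
    with take(2) show ?thesis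
      by simp
  qed
next
  fix s
  assume "s \<in> ?R"
  then consider
    "Vtab wt val i w = Vtab wt val (Suc i) w" "s \<in> opt_set wt val i w"
  | t where "Vtab_take wt val i w = Vtab wt val (Suc i) w" "t \<in> opt_set wt val i (w - wt (Suc i))"
      "s = insert (Suc i) t"
    by (auto split: if_splits)
  then show "s \<in> ?L"
  proof cases
    case 1
    then show ?thesis
      by (auto simp: opt_set_def)
  next
    case (2 t)
    then have t: "t \<subseteq> {1..i}" "Suc i \<notin> t" "finite t" "(\<Sum>j\<in>t. wt j) \<le> w - wt (Suc i)"
      "ereal (real_of_int (\<Sum>j\<in>t. val j)) = Vtab wt val i (w - wt (Suc i))"
      using finite_subset by (auto simp: opt_set_def)
    have "ereal (real_of_int (\<Sum>j\<in>s. val j)) = Vtab wt val (Suc i) w"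
      unfolding 2(3) ereal_sum_insert[OF t(3,2)] t(5) using 2(1) .
    moreover have "s \<subseteq> {1..Suc i}" "(\<Sum>j\<in>s. wt j) \<le> w"
      using t 2(3) by auto
    ultimately show ?thesis
      by (simp add: opt_set_def)
  qed
qed

lemma opt_set_finite: "finite (opt_set wt val i w)"
  by (rule finite_subset[of _ "Pow {1..i}"]) (auto simp: opt_set_def)

lemma Suc_notin_opt_set: "s \<in> opt_set wt val i w \<Longrightarrow> Suc i \<notin> s"
  by (auto simp: opt_set_def)

lemma inj_on_insert_opt_set: "inj_on (insert (Suc i)) (opt_set wt val i w)"
  by (rule inj_onI) (metis Suc_notin_opt_set insert_ident)

lemma opt_set_Suc:
  assumes "\<forall>j\<in>{1..i}. 0 \<le> wt j" "0 \<le> w"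
  shows "opt_set wt val (Suc i) w =
    (if Vtab wt val i w = Vtab_take wt val i w
     then opt_set wt val i w \<union> insert (Suc i) ` opt_set wt val i (w - wt (Suc i))
     else if Vtab wt val i w < Vtab_take wt val i w
     then insert (Suc i) ` opt_set wt val i (w - wt (Suc i))
     else opt_set wt val i w)"
  using opt_set_Suc_eq_Un[OF assms, of val] \<open>0 \<le> w\<close> by (auto simp: max_def)

lemma opt_set_nonempty:
  assumes "\<forall>j\<in>{1..i}. 0 \<le> wt j" "0 \<le> w"
  shows "opt_set wt val i w \<noteq> {}"
  using assms
proof (induction i arbitrary: w)
  case 0
  then show ?case
    by (simp add: opt_set_0)
next
  case (Suc i)
  have nonneg_i: "\<forall>j\<in>{1..i}. 0 \<le> wt j"
    using Suc.prems(1) by auto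
  show ?case
  proof (cases "Vtab wt val i w < Vtab_take wt val i w")
    case True
    then have "0 \<le> w - wt (Suc i)"
      using item_fits_if_Vtab_le_Vtab_take[OF Suc.prems(2) less_imp_le[OF True]] by simp
    then show ?thesis
      using True opt_set_Suc[OF nonneg_i Suc.prems(2)] Suc.IH[OF nonneg_i] by auto
  next
    case False
    then show ?thesis
      using opt_set_Suc[OF nonneg_i Suc.prems(2)] Suc.IH[OF nonneg_i Suc.prems(2)] by auto
  qed
qed

lemma opt_set_zero_capacity:
  assumes pos: "\<forall>j\<in>{1..i}. 0 < wt j"
  shows "opt_set wt val i 0 = {{}}"
proof -
  have "s = {}" if s: "s \<in> opt_set wt val i 0" for s
  proof (rule ccontr)
    assume "s \<noteq> {}"
    from s have "s \<subseteq> {1..i}" "(\<Sum>j\<in>s. wt j) \<le> 0"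
      by (auto simp: opt_set_def)
    moreover from this have "0 < (\<Sum>j\<in>s. wt j)"
      using pos \<open>s \<noteq> {}\<close> finite_subset by (intro sum_pos) auto
    ultimately show False
      by simp
  qed
  moreover have "opt_set wt val i 0 \<noteq> {}"
    using pos by (intro opt_set_nonempty) (auto simp: less_imp_le)
  ultimately show ?thesis
    by blast
qed

lemma card_opt_set:
  assumes "\<forall>j\<in>{1..i}. 0 \<le> wt j"
  shows "card (opt_set wt val i w) = Ctab wt val i w"
  using assms
proof (induction i arbitrary: w)
  case 0
  then show ?case
    by (cases "w < 0") (simp_all add: opt_set_negative opt_set_0)
next
  case (Suc i)
  have nonneg_i: "\<forall>j\<in>{1..i}. 0 \<le> wt j"
    using Suc.prems by auto
  show ?case
  proof (cases "w < 0")
    case True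
    then show ?thesis
      by (simp add: opt_set_negative)
  next
    case False
    let ?A = "opt_set wt val i w" and ?B = "opt_set wt val i (w - wt (Suc i))"
    have card_A: "card ?A = Ctab wt val i w"
      and card_B: "card (insert (Suc i) ` ?B) = Ctab wt val i (w - wt (Suc i))"
      using Suc.IH[OF nonneg_i] card_image[OF inj_on_insert_opt_set] by auto
    have "card (?A \<union> insert (Suc i) ` ?B) = card ?A + card (insert (Suc i) ` ?B)"
      by (intro card_Un_disjoint) (auto simp: opt_set_finite dest: Suc_notin_opt_set)
    then show ?thesis
      using False card_A card_B opt_set_Suc[OF nonneg_i, of w val] by (auto simp: Let_def)
  qed
qed

lemma sampler_Suc:
  assumes "0 < w"
  shows "sampler wt val (Suc i) w =
    (if Vtab wt val i w = Vtab_take wt val i w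
     then bind_pmf (bernoulli_pmf (real (Ctab wt val i (w - wt (Suc i))) / real (Ctab wt val (Suc i) w)))
       (\<lambda>c. if c then map_pmf (insert (Suc i)) (sampler wt val i (w - wt (Suc i)))
            else sampler wt val i w)
     else if Vtab wt val i w < Vtab_take wt val i w
     then map_pmf (insert (Suc i)) (sampler wt val i (w - wt (Suc i)))
     else sampler wt val i w)"
proof -
  have "Vtab wt val i w = Vtab_take wt val i w \<Longrightarrow> wt (Suc i) \<le> w"
    using item_fits_if_Vtab_le_Vtab_take[of w wt val i] assms by simp
  then show ?thesis
    using assms by (auto simp: max_def)
qed

lemma map_insert_pmf_of_set_opt_set:
  assumes "\<forall>j\<in>{1..i}. 0 \<le> wt j" "0 \<le> w"
  shows "map_pmf (insert (Suc i)) (pmf_of_set (opt_set wt val i w))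
    = pmf_of_set (insert (Suc i) ` opt_set wt val i w)"
  using assms by (simp add: map_pmf_of_set_inj inj_on_insert_opt_set opt_set_nonempty opt_set_finite)

lemma sampler_Suc_tie:
  assumes nonneg: "\<forall>j\<in>{1..Suc i}. 0 \<le> wt j" and "0 < w"
    and tie: "Vtab wt val i w = Vtab_take wt val i w"
    and sampler_A: "sampler wt val i w = pmf_of_set (opt_set wt val i w)"
    and sampler_B: "sampler wt val i (w - wt (Suc i)) = pmf_of_set (opt_set wt val i (w - wt (Suc i)))"
  shows "sampler wt val (Suc i) w = pmf_of_set (opt_set wt val (Suc i) w)"
proof -
  let ?A = "opt_set wt val i w" and ?B = "insert (Suc i) ` opt_set wt val i (w - wt (Suc i))"
  have nonneg_i: "\<forall>j\<in>{1..i}. 0 \<le> wt j"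
    using nonneg by auto
  have "0 \<le> w - wt (Suc i)"
    using item_fits_if_Vtab_le_Vtab_take[of w wt val i] \<open>0 < w\<close> tie by simp
  have opt: "opt_set wt val (Suc i) w = ?A \<union> ?B"
    using tie \<open>0 < w\<close> by (simp add: opt_set_Suc[OF nonneg_i])
  have card_B: "Ctab wt val i (w - wt (Suc i)) = card ?B"
    using nonneg_i by (simp add: card_opt_set card_image[OF inj_on_insert_opt_set])
  have card_Suc: "Ctab wt val (Suc i) w = card (?A \<union> ?B)"
    unfolding opt[symmetric] by (rule card_opt_set[OF nonneg, symmetric])
  have "sampler wt val (Suc i) w
      = bind_pmf (bernoulli_pmf (real (card ?B) / real (card (?A \<union> ?B))))
          (\<lambda>c. if c then pmf_of_set ?B else pmf_of_set ?A)"
    unfolding sampler_Suc[OF \<open>0 < w\<close>] card_B card_Suc sampler_A sampler_B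
      map_insert_pmf_of_set_opt_set[OF nonneg_i \<open>0 \<le> w - wt (Suc i)\<close>]
    using tie by simp
  also have "\<dots> = pmf_of_set (?A \<union> ?B)"
  proof (rule bind_bernoulli_pmf_of_set_Un)
    show "?A \<noteq> {}" "?B \<noteq> {}"
      using nonneg_i \<open>0 < w\<close> \<open>0 \<le> w - wt (Suc i)\<close> by (simp_all add: opt_set_nonempty)
    show "?A \<inter> ?B = {}"
      by (auto dest: Suc_notin_opt_set)
  qed (simp_all add: opt_set_finite)
  finally show ?thesis
    unfolding opt .
qed

lemma sampler_eq_pmf_of_set:
  assumes "\<forall>j\<in>{1..i}. 0 < wt j" "0 \<le> w"
  shows "sampler wt val i w = pmf_of_set (opt_set wt val i w)"
  using assms
proof (induction i arbitrary: w)
  case 0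
  then show ?case
    by (simp add: opt_set_0 pmf_of_set_singleton)
next
  case (Suc i)
  have pos_i: "\<forall>j\<in>{1..i}. 0 < wt j"
    using Suc.prems(1) by auto
  have nonneg: "\<forall>j\<in>{1..Suc i}. 0 \<le> wt j"
    using Suc.prems(1) by (auto simp: less_imp_le)
  then have nonneg_i: "\<forall>j\<in>{1..i}. 0 \<le> wt j"
    by auto
  show ?case
  proof (cases "w = 0")
    case True
    then show ?thesis
      by (simp add: opt_set_zero_capacity[OF Suc.prems(1)] pmf_of_set_singleton)
  next
    case False
    then have "0 < w"
      using Suc.prems(2) by simp
    have fits: "0 \<le> w - wt (Suc i)" if "Vtab wt val i w \<le> Vtab_take wt val i w"
      using item_fits_if_Vtab_le_Vtab_take[OF Suc.prems(2) that] by simp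
    consider (tie) "Vtab wt val i w = Vtab_take wt val i w"
      | (take) "Vtab wt val i w < Vtab_take wt val i w"
      | (skip) "Vtab_take wt val i w < Vtab wt val i w"
      by (rule linorder_cases)
    then show ?thesis
    proof cases
      case tie
      then show ?thesis
        using fits Suc.IH[OF pos_i] Suc.prems(2) by (intro sampler_Suc_tie[OF nonneg \<open>0 < w\<close>]) auto
    next
      case take
      then show ?thesis
        using fits[OF less_imp_le[OF take]] Suc.IH[OF pos_i] less_imp_neq[OF take] \<open>0 < w\<close>
        by (simp add: sampler_Suc[OF \<open>0 < w\<close>] opt_set_Suc[OF nonneg_i Suc.prems(2)]
            map_insert_pmf_of_set_opt_set[OF nonneg_i])
    next
      case skip
      then show ?thesis
        using Suc.IH[OF pos_i Suc.prems(2)] less_imp_not_less[OF skip] less_imp_neq[OF skip, symmetric]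
          \<open>0 < w\<close>
        by (simp add: sampler_Suc[OF \<open>0 < w\<close>] opt_set_Suc[OF nonneg_i Suc.prems(2)])
    qed
  qed
qed

lemma Vtab_eq_vmax:
  assumes "\<forall>j\<in>{1..n}. 0 \<le> wt j" "0 \<le> W"
  shows "Vtab wt val n W = ereal (real_of_int (vmax n wt val W))"
proof -
  obtain t where "t \<in> opt_set wt val n W"
    using opt_set_nonempty[OF assms] by blast
  then have t_feasible: "t \<in> feasible n wt W"
    and t_val: "ereal (real_of_int (\<Sum>j\<in>t. val j)) = Vtab wt val n W"
    by (auto simp: opt_set_def feasible_def)
  have "(\<Sum>j\<in>s. val j) \<le> (\<Sum>j\<in>t. val j)" if "s \<in> feasible n wt W" for s
  proof -
    have "ereal (real_of_int (\<Sum>j\<in>s. val j)) \<le> Vtab wt val n W"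
      using that sum_val_le_Vtab[OF assms(1)] by (auto simp: feasible_def)
    then show ?thesis
      unfolding t_val[symmetric] by (simp del: of_int_sum)
  qed
  moreover have "finite (feasible n wt W)"
    by (rule finite_subset[of _ "Pow {1..n}"]) (auto simp: feasible_def)
  ultimately have "vmax n wt val W = (\<Sum>j\<in>t. val j)"
    unfolding vmax_def using t_feasible by (intro Max_eqI) auto
  with t_val show ?thesis
    by simp
qed

lemma opt_sols_eq_opt_set:
  assumes "\<forall>j\<in>{1..n}. 0 \<le> wt j" "0 \<le> W"
  shows "opt_sols n wt val W = opt_set wt val n W"
  unfolding opt_sols_def opt_set_def feasible_def Vtab_eq_vmax[OF assms]
  by (auto simp del: of_int_sum)

theorem theorem2:
  fixes n :: nat and W :: int and s :: "nat set" and wt val :: "nat \<Rightarrow> int"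
  assumes "W > 0"
    and "\<forall>i\<in>{1..n}. wt i > 0"
    and "s \<in> opt_sols n wt val W"
  shows "pmf (sampler wt val n W) s = 1 / real (card (opt_sols n wt val W))"
proof -
  have nonneg: "\<forall>i\<in>{1..n}. 0 \<le> wt i"
    using assms(2) by auto
  have opt: "opt_sols n wt val W = opt_set wt val n W"
    using opt_sols_eq_opt_set[OF nonneg] assms(1) by simp
  have "sampler wt val n W = pmf_of_set (opt_sols n wt val W)"
    unfolding opt using sampler_eq_pmf_of_set[OF assms(2)] assms(1) by simp
  moreover have "finite (opt_sols n wt val W)"
    unfolding opt by (rule opt_set_finite)
  moreover have "opt_sols n wt val W \<noteq> {}"
    using assms(3) by blast
  ultimately show ?thesis
    using assms(3) by simp
qed

end
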